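(* Every perinormal domain is weakly normal (and hence seminormal).
   Context: All rings are commutative with identity; "local" means having a unique maximal ideal; an overring of a domain $R$ is a ring between $R$ and its fraction field. A ring extension $A \subseteq B$ satisfies going-down if whenever $\mathfrak{p} \subset \mathfrak{q}$ are primes of $A$ and $Q$ is a prime of $B$ with $Q \cap A = \mathfrak{q}$, there is a prime $P \subseteq Q$ of $B$ with $P \cap A = \mathfrak{p}$. A domain $R$ is perinormal if every local overring $S$ of $R$ such that $R \subseteq S$ satisfies going-down is a localization of $R$. A domain $R$ is weakly normal if for every integral overring $S$ of $R$ such that $\operatorname{Spec} S \to \operatorname{Spec} R$ is a bijection and, for every $P \in \operatorname{Spec} S$ with $\mathfrak{p} = P \cap R$, the residue field extension $R_{\mathfrak{p}}/\mathfrak{p}R_{\mathfrak{p}} \to S_P/PS_P$ is purely inseparable, one has $S = R$. A domain $R$ is seminormal if whenever $x$ in its fraction field satisfies $x^2, x^3 \in R$, then $x \in R$. *)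

theory Defs
  imports Main
begin

text \<open>Domains are represented as subrings R of a field (type 'a); the fraction
field of R is realised inside 'a as the set of quotients a/b.\<close>

definition is_subring :: "'a::field set \<Rightarrow> bool" where
  "is_subring S \<longleftrightarrow> 0 \<in> S \<and> 1 \<in> S \<and>
     (\<forall>a\<in>S. \<forall>b\<in>S. a + b \<in> S \<and> a - b \<in> S \<and> a * b \<in> S)"

definition frac :: "'a::field set \<Rightarrow> 'a set" where
  "frac R = {a / b | a b. a \<in> R \<and> b \<in> R \<and> b \<noteq> 0}"

definition overring :: "'a::field set \<Rightarrow> 'a set \<Rightarrow> bool" where
  "overring R S \<longleftrightarrow> is_subring S \<and> R \<subseteq> S \<and> S \<subseteq> frac R"

definition is_ideal :: "'a::field set \<Rightarrow> 'a set \<Rightarrow> bool" where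
  "is_ideal S I \<longleftrightarrow> I \<subseteq> S \<and> 0 \<in> I \<and> (\<forall>a\<in>I. \<forall>b\<in>I. a + b \<in> I) \<and>
     (\<forall>s\<in>S. \<forall>a\<in>I. s * a \<in> I)"

definition prime_ideal :: "'a::field set \<Rightarrow> 'a set \<Rightarrow> bool" where
  "prime_ideal S P \<longleftrightarrow> is_ideal S P \<and> 1 \<notin> P \<and>
     (\<forall>a\<in>S. \<forall>b\<in>S. a * b \<in> P \<longrightarrow> a \<in> P \<or> b \<in> P)"

definition maximal_ideal :: "'a::field set \<Rightarrow> 'a set \<Rightarrow> bool" where
  "maximal_ideal S M \<longleftrightarrow> is_ideal S M \<and> M \<noteq> S \<and>
     (\<forall>J. is_ideal S J \<and> M \<subseteq> J \<longrightarrow> J = M \<or> J = S)"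

definition local_ring :: "'a::field set \<Rightarrow> bool" where
  "local_ring S \<longleftrightarrow> (\<exists>!M. maximal_ideal S M)"

definition going_down :: "'a::field set \<Rightarrow> 'a set \<Rightarrow> bool" where
  "going_down A B \<longleftrightarrow> (\<forall>p q Q. prime_ideal A p \<and> prime_ideal A q \<and> p \<subset> q \<and>
     prime_ideal B Q \<and> Q \<inter> A = q \<longrightarrow> (\<exists>P. prime_ideal B P \<and> P \<subseteq> Q \<and> P \<inter> A = p))"

definition mult_closed :: "'a::field set \<Rightarrow> 'a set \<Rightarrow> bool" where
  "mult_closed R T \<longleftrightarrow> T \<subseteq> R \<and> 1 \<in> T \<and> 0 \<notin> T \<and> (\<forall>a\<in>T. \<forall>b\<in>T. a * b \<in> T)"

text \<open>Localization of R at a multiplicative set T (inside the fraction field);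
 with I an ideal, loc_ideal I T is the extended ideal I T\<inverse>R.\<close>
definition loc_ideal :: "'a::field set \<Rightarrow> 'a set \<Rightarrow> 'a set" where
  "loc_ideal I T = {a / s | a s. a \<in> I \<and> s \<in> T}"

definition is_localization :: "'a::field set \<Rightarrow> 'a set \<Rightarrow> bool" where
  "is_localization R S \<longleftrightarrow> (\<exists>T. mult_closed R T \<and> S = loc_ideal R T)"

definition perinormal :: "'a::field set \<Rightarrow> bool" where
  "perinormal R \<longleftrightarrow> (\<forall>S. overring R S \<and> local_ring S \<and> going_down R S
      \<longrightarrow> is_localization R S)"

definition integral_over :: "'a::field set \<Rightarrow> 'a \<Rightarrow> bool" where
  "integral_over R x \<longleftrightarrow> (\<exists>n c. (\<forall>i<n. c i \<in> R) \<and> x ^ n + (\<Sum>i<n. c i * x ^ i) = 0)"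

text \<open>Characteristic of the residue field A/m (A local with maximal ideal m),
 and its characteristic exponent (1 in characteristic 0).\<close>
definition res_char :: "'a::field set \<Rightarrow> nat" where
  "res_char m = (if \<exists>n>0. of_nat n \<in> m then LEAST n. n > 0 \<and> of_nat n \<in> m else 0)"

definition char_exp :: "'a::field set \<Rightarrow> nat" where
  "char_exp m = (if res_char m = 0 then 1 else res_char m)"

text \<open>The residue field extension R_p/pR_p \<rightarrow> S_P/PS_P (p = P \<inter> R) is purely
 inseparable: every element of S_P/PS_P has a q-th power (q a power of the
 characteristic exponent) lying in (the image of) R_p/pR_p.\<close>
definition residue_purely_insep :: "'a::field set \<Rightarrow> 'a set \<Rightarrow> 'a set \<Rightarrow> bool" where
  "residue_purely_insep R S P \<longleftrightarrow>
     (let p = P \<inter> R; A = loc_ideal R (R - p); m = loc_ideal p (R - p);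
          B = loc_ideal S (S - P); N = loc_ideal P (S - P)
      in \<forall>x\<in>B. \<exists>y\<in>A. \<exists>e::nat. x ^ (char_exp m ^ e) - y \<in> N)"

definition weakly_normal :: "'a::field set \<Rightarrow> bool" where
  "weakly_normal R \<longleftrightarrow> (\<forall>S. overring R S \<and> (\<forall>x\<in>S. integral_over R x) \<and>
      bij_betw (\<lambda>P. P \<inter> R) {P. prime_ideal S P} {p. prime_ideal R p} \<and>
      (\<forall>P. prime_ideal S P \<longrightarrow> residue_purely_insep R S P)
      \<longrightarrow> S = R)"

definition seminormal :: "'a::field set \<Rightarrow> bool" where
  "seminormal R \<longleftrightarrow> (\<forall>x\<in>frac R. x ^ 2 \<in> R \<and> x ^ 3 \<in> R \<longrightarrow> x \<in> R)"

end

theory Submission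
  imports Defs
begin

text \<open>Let S be an integral overring of R whose primes contract injectively to those of R. Going up and lying over hold for S over R,
  and together with injectivity they give going down from R to every localization S_M at
  a prime M. That localization is local, so by perinormality it is a localization of R.
  Hence every x \<in> S can be written with a denominator outside any given prime of R, i.e.
  the conductor of x into R lies in no prime, so x \<in> R and S = R.\<close>

lemma subring_zero: "is_subring S \<Longrightarrow> 0 \<in> S"
  and subring_one: "is_subring S \<Longrightarrow> 1 \<in> S"
  and subring_add: "is_subring S \<Longrightarrow> a \<in> S \<Longrightarrow> b \<in> S \<Longrightarrow> a + b \<in> S"
  and subring_diff: "is_subring S \<Longrightarrow> a \<in> S \<Longrightarrow> b \<in> S \<Longrightarrow> a - b \<in> S"
  and subring_mult: "is_subring S \<Longrightarrow> a \<in> S \<Longrightarrow> b \<in> S \<Longrightarrow> a * b \<in> S"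
  by (simp_all add: is_subring_def)

lemma subring_power: "is_subring S \<Longrightarrow> a \<in> S \<Longrightarrow> a ^ n \<in> S"
  by (induction n) (simp_all add: subring_one subring_mult)

lemma subring_sum: "is_subring S \<Longrightarrow> (\<And>i. i < (n::nat) \<Longrightarrow> f i \<in> S) \<Longrightarrow> (\<Sum>i<n. f i) \<in> S"
  by (induction n) (simp_all add: subring_zero subring_add)

lemma ideal_subset: "is_ideal S I \<Longrightarrow> I \<subseteq> S"
  and ideal_zero: "is_ideal S I \<Longrightarrow> 0 \<in> I"
  and ideal_add: "is_ideal S I \<Longrightarrow> a \<in> I \<Longrightarrow> b \<in> I \<Longrightarrow> a + b \<in> I"
  and ideal_mult_left: "is_ideal S I \<Longrightarrow> s \<in> S \<Longrightarrow> a \<in> I \<Longrightarrow> s * a \<in> I"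
  by (simp_all add: is_ideal_def)

lemma ideal_mult_right: "is_ideal S I \<Longrightarrow> s \<in> S \<Longrightarrow> a \<in> I \<Longrightarrow> a * s \<in> I"
  using ideal_mult_left[of S I s a] by (simp add: mult.commute)

lemma ideal_diff: "is_subring S \<Longrightarrow> is_ideal S I \<Longrightarrow> a \<in> I \<Longrightarrow> b \<in> I \<Longrightarrow> a - b \<in> I"
  using ideal_add[of S I a "(0 - 1) * b"] ideal_mult_left[of S I "0 - 1" b]
    subring_diff[OF _ subring_zero subring_one, of S]
  by simp

lemma ideal_sum: "is_ideal S I \<Longrightarrow> (\<And>i. i < (n::nat) \<Longrightarrow> f i \<in> I) \<Longrightarrow> (\<Sum>i<n. f i) \<in> I"
  by (induction n) (simp_all add: ideal_zero ideal_add)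

lemma prime_idealD:
  assumes "prime_ideal S P"
  shows "is_ideal S P" "1 \<notin> P" "a \<in> S \<Longrightarrow> b \<in> S \<Longrightarrow> a * b \<in> P \<Longrightarrow> a \<in> P \<or> b \<in> P"
  using assms by (auto simp: prime_ideal_def)

lemma prime_ideal_power:
  assumes "prime_ideal S P" "is_subring S" "a \<in> S" "a ^ n \<in> P"
  shows "a \<in> P"
  using assms(4)
proof (induction n)
  case 0
  then show ?case using prime_idealD(2)[OF assms(1)] by simp
next
  case (Suc n)
  then show ?case using prime_idealD(3)[OF assms(1) assms(3) subring_power[OF assms(2,3)]] by auto
qed

lemma mult_closed_prime_compl:
  "is_subring S \<Longrightarrow> prime_ideal S P \<Longrightarrow> mult_closed S (S - P)"
  unfolding mult_closed_def prime_ideal_def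
  by (auto simp: subring_one subring_mult ideal_zero)

lemma zero_prime_ideal: "is_subring S \<Longrightarrow> prime_ideal S {0}"
  unfolding prime_ideal_def is_ideal_def by (simp add: subring_zero)

lemma prime_ideal_contract:
  assumes A: "is_subring A" and AB: "A \<subseteq> B" and Q: "prime_ideal B Q"
  shows "prime_ideal A (Q \<inter> A)"
  unfolding prime_ideal_def is_ideal_def
proof (intro conjI ballI impI)
  show "Q \<inter> A \<subseteq> A" "0 \<in> Q \<inter> A"
    using ideal_zero[OF prime_idealD(1)[OF Q]] subring_zero[OF A] by auto
  show "1 \<notin> Q \<inter> A" using prime_idealD(2)[OF Q] by blast
  fix a b assume "a \<in> Q \<inter> A" "b \<in> Q \<inter> A"
  then show "a + b \<in> Q \<inter> A" using ideal_add[OF prime_idealD(1)[OF Q]] subring_add[OF A] by blast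
next
  fix s a assume "s \<in> A" "a \<in> Q \<inter> A"
  then show "s * a \<in> Q \<inter> A"
    using ideal_mult_left[OF prime_idealD(1)[OF Q]] subring_mult[OF A] AB by blast
next
  fix a b assume "a \<in> A" "b \<in> A" "a * b \<in> Q \<inter> A"
  then show "a \<in> Q \<inter> A \<or> b \<in> Q \<inter> A" using prime_idealD(3)[OF Q] AB by blast
qed

definition max_disjoint_ideal :: "'a::field set \<Rightarrow> 'a set \<Rightarrow> 'a set \<Rightarrow> bool" where
  "max_disjoint_ideal A T Q \<longleftrightarrow> is_ideal A Q \<and> Q \<inter> T = {} \<and>
     (\<forall>J. is_ideal A J \<and> Q \<subseteq> J \<and> J \<inter> T = {} \<longrightarrow> J = Q)"

lemma max_disjoint_idealD:
  assumes "max_disjoint_ideal A T Q"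
  shows "is_ideal A Q" "Q \<inter> T = {}" "is_ideal A J \<Longrightarrow> Q \<subseteq> J \<Longrightarrow> J \<inter> T = {} \<Longrightarrow> J = Q"
  using assms unfolding max_disjoint_ideal_def by blast+

lemma ideal_Union_chain:
  assumes "\<C> \<noteq> {}" "\<And>J. J \<in> \<C> \<Longrightarrow> is_ideal A J"
    and "\<And>J K. J \<in> \<C> \<Longrightarrow> K \<in> \<C> \<Longrightarrow> J \<subseteq> K \<or> K \<subseteq> J"
  shows "is_ideal A (\<Union>\<C>)"
  unfolding is_ideal_def
proof (intro conjI ballI)
  show "\<Union>\<C> \<subseteq> A" using assms(2) ideal_subset by blast
  obtain J where "J \<in> \<C>" using assms(1) by blast
  then show "0 \<in> \<Union>\<C>" using assms(2) ideal_zero by blast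
next
  fix a b assume "a \<in> \<Union>\<C>" "b \<in> \<Union>\<C>"
  then obtain J K where JK: "J \<in> \<C>" "K \<in> \<C>" "a \<in> J" "b \<in> K" by blast
  then consider "a \<in> K" | "b \<in> J" using assms(3) by blast
  then show "a + b \<in> \<Union>\<C>"
    by cases (use JK assms(2) ideal_add in blast)+
next
  fix s a assume "s \<in> A" "a \<in> \<Union>\<C>"
  then show "s * a \<in> \<Union>\<C>" using assms(2) ideal_mult_left by blast
qed

lemma max_disjoint_ideal_exists:
  assumes "is_ideal A I" "I \<inter> T = {}"
  obtains Q where "max_disjoint_ideal A T Q" "I \<subseteq> Q"
proof -
  let ?F = "{J. is_ideal A J \<and> I \<subseteq> J \<and> J \<inter> T = {}}"
  have "\<Union>\<C> \<in> ?F" if ne: "\<C> \<noteq> {}" and ch: "subset.chain ?F \<C>" for \<C>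
  proof -
    have "\<C> \<subseteq> ?F" "\<And>J K. J \<in> \<C> \<Longrightarrow> K \<in> \<C> \<Longrightarrow> J \<subseteq> K \<or> K \<subseteq> J"
      using ch unfolding subset.chain_def by blast+
    then have "is_ideal A (\<Union>\<C>)" using ideal_Union_chain[OF ne] by blast
    moreover have "I \<subseteq> \<Union>\<C>" "\<Union>\<C> \<inter> T = {}" using \<open>\<C> \<subseteq> ?F\<close> ne by blast+
    ultimately show ?thesis by blast
  qed
  moreover have "?F \<noteq> {}" using assms by blast
  ultimately obtain Q where Q: "Q \<in> ?F" and max: "\<forall>J\<in>?F. Q \<subseteq> J \<longrightarrow> J = Q"
    using subset_Zorn_nonempty[of ?F] by meson
  show thesis
  proof (rule that)
    show "I \<subseteq> Q" using Q by blast
    show "max_disjoint_ideal A T Q"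
      unfolding max_disjoint_ideal_def using Q max \<open>I \<subseteq> Q\<close> by blast
  qed
qed

text \<open>The ideal Q + aA strictly contains Q, so it meets T.\<close>
lemma max_disjoint_ideal_meets:
  assumes A: "is_subring A" and Q: "max_disjoint_ideal A T Q" and a: "a \<in> A" "a \<notin> Q"
  obtains t x s where "t \<in> T" "x \<in> Q" "s \<in> A" "t = x + a * s"
proof -
  let ?J = "{x + a * s | x s. x \<in> Q \<and> s \<in> A}"
  have QI: "is_ideal A Q" using max_disjoint_idealD(1)[OF Q] .
  have "is_ideal A ?J" unfolding is_ideal_def
  proof (intro conjI ballI)
    show "?J \<subseteq> A" using ideal_subset[OF QI] subring_add[OF A] subring_mult[OF A a(1)] by blast
    show "0 \<in> ?J" using ideal_zero[OF QI] subring_zero[OF A] by force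
  next
    fix u v assume "u \<in> ?J" "v \<in> ?J"
    then obtain x s y t where uv: "u = x + a * s" "v = y + a * t" "x \<in> Q" "y \<in> Q" "s \<in> A" "t \<in> A"
      by auto
    have "u + v = (x + y) + a * (s + t)" using uv(1,2) by (simp add: algebra_simps)
    moreover have "x + y \<in> Q" "s + t \<in> A" using uv ideal_add[OF QI] subring_add[OF A] by simp_all
    ultimately show "u + v \<in> ?J" by blast
  next
    fix r u assume r: "r \<in> A" and "u \<in> ?J"
    then obtain x s where u: "u = x + a * s" "x \<in> Q" "s \<in> A" by auto
    have "r * u = r * x + a * (r * s)" using u(1) by (simp add: algebra_simps)
    moreover have "r * x \<in> Q" "r * s \<in> A" using u ideal_mult_left[OF QI r] subring_mult[OF A r] by simp_all
    ultimately show "r * u \<in> ?J" by blast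
  qed
  moreover have "Q \<subseteq> ?J" using subring_zero[OF A] by force
  moreover have "a \<in> ?J" using ideal_zero[OF QI] subring_one[OF A] by force
  ultimately have "?J \<inter> T \<noteq> {}" using max_disjoint_idealD(3)[OF Q] a(2) by blast
  then show thesis using that by blast
qed

lemma max_disjoint_ideal_prime:
  assumes A: "is_subring A" and T: "mult_closed A T" and Q: "max_disjoint_ideal A T Q"
  shows "prime_ideal A Q"
  unfolding prime_ideal_def
proof (intro conjI ballI impI)
  have QI: "is_ideal A Q" and QT: "Q \<inter> T = {}" using max_disjoint_idealD[OF Q] by blast+
  show "is_ideal A Q" by fact
  show "1 \<notin> Q" using QT T by (auto simp: mult_closed_def)
  fix a b assume a: "a \<in> A" and b: "b \<in> A" and ab: "a * b \<in> Q"
  show "a \<in> Q \<or> b \<in> Q"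
  proof (rule ccontr)
    assume "\<not> (a \<in> Q \<or> b \<in> Q)"
    then have "a \<notin> Q" "b \<notin> Q" by simp_all
    obtain t x s where t: "t \<in> T" "x \<in> Q" "s \<in> A" "t = x + a * s"
      using max_disjoint_ideal_meets[OF A Q a \<open>a \<notin> Q\<close>] .
    obtain u y r where u: "u \<in> T" "y \<in> Q" "r \<in> A" "u = y + b * r"
      using max_disjoint_ideal_meets[OF A Q b \<open>b \<notin> Q\<close>] .
    have "t * u = x * u + y * (a * s) + (a * b) * (s * r)"
      using t u by (simp add: algebra_simps)
    also have "\<dots> \<in> Q"
    proof (intro ideal_add[OF QI])
      have "u \<in> A" using u(1) T by (auto simp: mult_closed_def)
      then show "x * u \<in> Q" using ideal_mult_right[OF QI _ t(2)] by blast
      show "y * (a * s) \<in> Q" using ideal_mult_right[OF QI subring_mult[OF A a t(3)] u(2)] .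
      show "(a * b) * (s * r) \<in> Q" using ideal_mult_right[OF QI subring_mult[OF A t(3) u(3)] ab] .
    qed
    finally have "t * u \<in> Q" .
    moreover have "t * u \<in> T" using t(1) u(1) T by (simp add: mult_closed_def)
    ultimately show False using QT by blast
  qed
qed

lemma mult_closed_mono: "mult_closed R T \<Longrightarrow> R \<subseteq> S \<Longrightarrow> mult_closed S T"
  unfolding mult_closed_def by blast

lemma power_diff_mem_ideal:
  assumes S: "is_subring S" and Q: "is_ideal S Q" and "y \<in> S" "z \<in> S" "y - z \<in> Q"
  shows "y ^ k - z ^ k \<in> Q"
proof (induction k)
  case 0
  then show ?case using ideal_zero[OF Q] by simp
next
  case (Suc k)
  have "y ^ Suc k - z ^ Suc k = y * (y ^ k - z ^ k) + z ^ k * (y - z)"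
    by (simp add: algebra_simps)
  also have "\<dots> \<in> Q"
    using Suc assms(3-5) by (intro ideal_add[OF Q] ideal_mult_left[OF Q] subring_power[OF S])
  finally show ?case .
qed

lemma monic_poly_diff_mem_ideal:
  assumes S: "is_subring S" and Q: "is_ideal S Q" and yz: "y \<in> S" "z \<in> S" "y - z \<in> Q"
    and c: "\<And>i. i < n \<Longrightarrow> c i \<in> S"
  shows "(y ^ n + (\<Sum>i<n. c i * y ^ i)) - (z ^ n + (\<Sum>i<n. c i * z ^ i)) \<in> Q"
proof -
  have "(y ^ n + (\<Sum>i<n. c i * y ^ i)) - (z ^ n + (\<Sum>i<n. c i * z ^ i))
      = (y ^ n - z ^ n) + (\<Sum>i<n. c i * (y ^ i - z ^ i))"
    by (simp add: algebra_simps sum_subtractf)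
  also have "\<dots> \<in> Q"
    using power_diff_mem_ideal[OF S Q yz] c
    by (intro ideal_add[OF Q] ideal_sum[OF Q] ideal_mult_left[OF Q]) auto
  finally show ?thesis .
qed

lemma integral_over_scaled:
  assumes R: "is_subring R" and s: "integral_over R s" and r: "r \<in> R"
  obtains n d where "\<And>i. i < n \<Longrightarrow> \<exists>c\<in>R. d i = c * r"
    and "(r * s) ^ n + (\<Sum>i<n. d i * (r * s) ^ i) = 0"
proof -
  obtain n c where c: "\<forall>i<n. c i \<in> R" and eq: "s ^ n + (\<Sum>i<n. c i * s ^ i) = 0"
    using s by (auto simp: integral_over_def)
  define d where "d i = c i * r ^ (n - i)" for i
  show thesis
  proof
    fix i assume i: "i < n"
    then have "d i = (c i * r ^ (n - Suc i)) * r"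
      by (simp add: d_def power_Suc2[symmetric] Suc_diff_Suc)
    then show "\<exists>c\<in>R. d i = c * r"
      using c i by (blast intro: subring_mult[OF R] subring_power[OF R r])
  next
    have "d i * (r * s) ^ i = r ^ n * (c i * s ^ i)" if "i < n" for i
    proof -
      have "r ^ n = r ^ (n - i) * r ^ i" using that by (simp add: power_add[symmetric])
      then show ?thesis by (simp add: d_def power_mult_distrib algebra_simps)
    qed
    then have "(\<Sum>i<n. d i * (r * s) ^ i) = (\<Sum>i<n. r ^ n * (c i * s ^ i))"
      by (intro sum.cong) auto
    then have "(r * s) ^ n + (\<Sum>i<n. d i * (r * s) ^ i) = r ^ n * (s ^ n + (\<Sum>i<n. c i * s ^ i))"
      by (simp add: sum_distrib_left distrib_left power_mult_distrib)
    then show "(r * s) ^ n + (\<Sum>i<n. d i * (r * s) ^ i) = 0" using eq by simp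
  qed
qed

text \<open>An element r \<in> q outside Q would give t = x + r s \<in> R - q with x \<in> Q; reducing the
  scaled integral equation of r s modulo Q then forces t^n \<in> q.\<close>
lemma integral_max_disjoint_ideal_contains:
  assumes R: "is_subring R" and S: "is_subring S" and RS: "R \<subseteq> S"
    and int: "\<forall>s\<in>S. integral_over R s"
    and q: "prime_ideal R q" and Q: "max_disjoint_ideal S (R - q) Q"
  shows "q \<subseteq> Q"
proof
  fix r assume rq: "r \<in> q"
  have qI: "is_ideal R q" using prime_idealD(1)[OF q] .
  have QI: "is_ideal S Q" and QR: "Q \<inter> R \<subseteq> q" using max_disjoint_idealD[OF Q] by blast+
  have rR: "r \<in> R" using rq ideal_subset[OF qI] by blast
  show "r \<in> Q"
  proof (rule ccontr)
    assume "r \<notin> Q"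
    then obtain t x s where t: "t \<in> R - q" and x: "x \<in> Q" and s: "s \<in> S" and tx: "t = x + r * s"
      using max_disjoint_ideal_meets[OF S Q] rR RS by blast
    obtain n d where d: "\<And>i. i < n \<Longrightarrow> \<exists>c\<in>R. d i = c * r"
      and eq: "(r * s) ^ n + (\<Sum>i<n. d i * (r * s) ^ i) = 0"
      using integral_over_scaled[OF R _ rR] int s by blast
    have dq: "d i \<in> q" if "i < n" for i
      using d[OF that] ideal_mult_left[OF qI _ rq] by auto
    have dR: "d i \<in> R" if "i < n" for i using dq[OF that] ideal_subset[OF qI] by blast
    have tR: "t \<in> R" using t by blast
    have "t \<in> S" "r * s \<in> S" "t - r * s \<in> Q" using tR RS subring_mult[OF S _ s] rR tx x by auto
    from monic_poly_diff_mem_ideal[OF S QI this, of n d]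
    have "t ^ n + (\<Sum>i<n. d i * t ^ i) \<in> Q" using eq dR RS by auto
    moreover have "t ^ n + (\<Sum>i<n. d i * t ^ i) \<in> R"
      using dR tR by (intro subring_add[OF R] subring_power[OF R] subring_sum[OF R] subring_mult[OF R])
    ultimately have "t ^ n + (\<Sum>i<n. d i * t ^ i) \<in> q" using QR by blast
    moreover have "(\<Sum>i<n. d i * t ^ i) \<in> q"
      using dq tR by (intro ideal_sum[OF qI] ideal_mult_right[OF qI] subring_power[OF R])
    ultimately have "t ^ n \<in> q" using ideal_diff[OF R qI] by fastforce
    then show False using prime_ideal_power[OF q R tR] t by blast
  qed
qed

lemma integral_going_up:
  assumes R: "is_subring R" and S: "is_subring S" and RS: "R \<subseteq> S"
    and int: "\<forall>s\<in>S. integral_over R s"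
    and P: "prime_ideal S P" and q: "prime_ideal R q" and Pq: "P \<inter> R \<subseteq> q"
  obtains Q where "prime_ideal S Q" "P \<subseteq> Q" "Q \<inter> R = q"
proof -
  have T: "mult_closed S (R - q)" using mult_closed_mono[OF mult_closed_prime_compl[OF R q] RS] .
  obtain Q where Q: "max_disjoint_ideal S (R - q) Q" and PQ: "P \<subseteq> Q"
    using max_disjoint_ideal_exists[OF prime_idealD(1)[OF P], of "R - q"] Pq by blast
  have "Q \<inter> R = q"
    using integral_max_disjoint_ideal_contains[OF R S RS int q Q] max_disjoint_idealD(2)[OF Q]
      ideal_subset[OF prime_idealD(1)[OF q]] by blast
  then show thesis using that max_disjoint_ideal_prime[OF S T Q] PQ by blast
qed

lemma integral_lying_over:
  assumes R: "is_subring R" and S: "is_subring S" and RS: "R \<subseteq> S"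
    and int: "\<forall>s\<in>S. integral_over R s" and q: "prime_ideal R q"
  obtains Q where "prime_ideal S Q" "Q \<inter> R = q"
  using integral_going_up[OF R S RS int zero_prime_ideal[OF S] q]
    ideal_zero[OF prime_idealD(1)[OF q]] by blast

lemma ideal_self: "is_subring S \<Longrightarrow> is_ideal S S"
  unfolding is_ideal_def by (auto simp: subring_zero subring_add subring_mult)

lemma proper_ideal_in_prime:
  assumes A: "is_subring A" and I: "is_ideal A I" and "1 \<notin> I"
  obtains Q where "prime_ideal A Q" "I \<subseteq> Q"
proof -
  have T: "mult_closed A {1}" using subring_one[OF A] by (simp add: mult_closed_def)
  obtain Q where "max_disjoint_ideal A {1} Q" "I \<subseteq> Q"
    using max_disjoint_ideal_exists[OF I, of "{1}"] \<open>1 \<notin> I\<close> by blast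
  then show thesis using that max_disjoint_ideal_prime[OF A T] by blast
qed

lemma frac_divide:
  assumes R: "is_subring R" and x: "x \<in> frac R" and y: "y \<in> frac R"
  shows "x / y \<in> frac R"
proof -
  obtain a b c d where ab: "x = a / b" "a \<in> R" "b \<in> R" "b \<noteq> 0"
    and cd: "y = c / d" "c \<in> R" "d \<in> R" "d \<noteq> 0"
    using x y unfolding frac_def by blast
  show ?thesis
  proof (cases "c = 0")
    case True
    then show ?thesis using ab cd subring_zero[OF R] subring_one[OF R] unfolding frac_def by force
  next
    case False
    have "x / y = (a * d) / (b * c)" using ab cd False by simp
    moreover have "a * d \<in> R" "b * c \<in> R" "b * c \<noteq> 0"
      using ab cd False subring_mult[OF R] by auto
    ultimately show ?thesis unfolding frac_def by blast
  qed
qed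

lemma loc_idealI: "a \<in> X \<Longrightarrow> s \<in> T \<Longrightarrow> a / s \<in> loc_ideal X T"
  unfolding loc_ideal_def by blast

lemma loc_idealE:
  "y \<in> loc_ideal X T \<Longrightarrow> (\<And>a s. y = a / s \<Longrightarrow> a \<in> X \<Longrightarrow> s \<in> T \<Longrightarrow> thesis) \<Longrightarrow> thesis"
  unfolding loc_ideal_def by blast

lemma subset_loc_ideal: "mult_closed S T \<Longrightarrow> X \<subseteq> loc_ideal X T"
  using loc_idealI[of _ X 1 T] by (force simp: mult_closed_def)

lemma mult_closed_nonzero: "mult_closed S T \<Longrightarrow> s \<in> T \<Longrightarrow> s \<noteq> 0"
  by (auto simp: mult_closed_def)

lemma loc_ideal_add_diff:
  assumes S: "is_subring S" and T: "mult_closed S T" and X: "is_ideal S X"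
    and x: "x \<in> loc_ideal X T" and y: "y \<in> loc_ideal X T"
  shows "x + y \<in> loc_ideal X T" "x - y \<in> loc_ideal X T"
proof -
  obtain a s b t where a: "x = a / s" "a \<in> X" "s \<in> T" and b: "y = b / t" "b \<in> X" "t \<in> T"
    using x y by (meson loc_idealE)
  have st: "s * t \<in> T" "s \<noteq> 0" "t \<noteq> 0"
    using a b T mult_closed_nonzero[OF T] by (auto simp: mult_closed_def)
  have sS: "s \<in> S" "t \<in> S" using a b T by (auto simp: mult_closed_def)
  have "x + y = (a * t + b * s) / (s * t)" "x - y = (a * t - b * s) / (s * t)"
    using a b st by (simp_all add: field_simps)
  moreover have "a * t + b * s \<in> X" "a * t - b * s \<in> X"
    using a b sS ideal_mult_right[OF X] by (auto intro: ideal_add[OF X] ideal_diff[OF S X])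
  ultimately show "x + y \<in> loc_ideal X T" "x - y \<in> loc_ideal X T"
    using loc_idealI[OF _ st(1)] by simp_all
qed

lemma loc_ideal_mult:
  assumes T: "mult_closed S T" and X: "is_ideal S X"
    and y: "y \<in> loc_ideal S T" and x: "x \<in> loc_ideal X T"
  shows "y * x \<in> loc_ideal X T"
proof -
  obtain a s b t where a: "x = a / s" "a \<in> X" "s \<in> T" and b: "y = b / t" "b \<in> S" "t \<in> T"
    using x y by (meson loc_idealE)
  have "y * x = (b * a) / (t * s)" using a b by simp
  moreover have "t * s \<in> T" using a b T by (simp add: mult_closed_def)
  ultimately show ?thesis using loc_idealI[OF ideal_mult_left[OF X b(2) a(2)]] by simp
qed

lemma subring_loc_ideal:
  assumes S: "is_subring S" and T: "mult_closed S T"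
  shows "is_subring (loc_ideal S T)"
  unfolding is_subring_def
proof (intro conjI ballI)
  show "0 \<in> loc_ideal S T" "1 \<in> loc_ideal S T"
    using subset_loc_ideal[OF T, of S] subring_zero[OF S] subring_one[OF S] by auto
  fix x y assume "x \<in> loc_ideal S T" "y \<in> loc_ideal S T"
  then show "x + y \<in> loc_ideal S T" "x - y \<in> loc_ideal S T" "x * y \<in> loc_ideal S T"
    using loc_ideal_add_diff[OF S T ideal_self[OF S]] loc_ideal_mult[OF T ideal_self[OF S]] by blast+
qed

lemma is_ideal_loc_ideal:
  assumes S: "is_subring S" and T: "mult_closed S T" and X: "is_ideal S X"
  shows "is_ideal (loc_ideal S T) (loc_ideal X T)"
  unfolding is_ideal_def
proof (intro conjI ballI)
  show "loc_ideal X T \<subseteq> loc_ideal S T"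
    using ideal_subset[OF X] unfolding loc_ideal_def by blast
  show "0 \<in> loc_ideal X T" using subset_loc_ideal[OF T] ideal_zero[OF X] by blast
next
  fix x y assume "x \<in> loc_ideal X T" "y \<in> loc_ideal X T"
  then show "x + y \<in> loc_ideal X T" by (rule loc_ideal_add_diff(1)[OF S T X])
next
  fix y x assume "y \<in> loc_ideal S T" "x \<in> loc_ideal X T"
  then show "y * x \<in> loc_ideal X T" by (rule loc_ideal_mult[OF T X])
qed

text \<open>Elements of T are units of the localization.\<close>
lemma loc_ideal_proper_disjoint:
  assumes S: "is_subring S" and T: "mult_closed S T"
    and J: "is_ideal (loc_ideal S T) J" and "1 \<notin> J"
  shows "J \<inter> T = {}"
proof (rule ccontr)
  assume "J \<inter> T \<noteq> {}"
  then obtain t where t: "t \<in> J" "t \<in> T" by blast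
  have "(1 / t) * t \<in> J" using ideal_mult_left[OF J loc_idealI[OF subring_one[OF S] t(2)] t(1)] .
  then show False using \<open>1 \<notin> J\<close> mult_closed_nonzero[OF T t(2)] by simp
qed

lemma loc_ideal_subset_ideal:
  assumes S: "is_subring S" and T: "mult_closed S T"
    and J: "is_ideal (loc_ideal S T) J" and "P \<subseteq> J"
  shows "loc_ideal P T \<subseteq> J"
proof
  fix y assume "y \<in> loc_ideal P T"
  then obtain a s where a: "y = a / s" "a \<in> P" "s \<in> T" by (rule loc_idealE)
  have "(1 / s) * a \<in> J"
    using ideal_mult_left[OF J loc_idealI[OF subring_one[OF S] a(3)]] a(2) \<open>P \<subseteq> J\<close> by blast
  then show "y \<in> J" using a(1) by simp
qed

lemma loc_ideal_prime_contract:
  assumes S: "is_subring S" and T: "mult_closed S T"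
    and P: "prime_ideal S P" and PT: "P \<inter> T = {}"
  shows "loc_ideal P T \<inter> S = P"
proof
  show "P \<subseteq> loc_ideal P T \<inter> S" using subset_loc_ideal[OF T] ideal_subset[OF prime_idealD(1)[OF P]] by blast
  show "loc_ideal P T \<inter> S \<subseteq> P"
  proof
    fix r assume r: "r \<in> loc_ideal P T \<inter> S"
    then obtain a s where a: "r = a / s" "a \<in> P" "s \<in> T" by (auto elim: loc_idealE)
    have "s * r \<in> P" using a mult_closed_nonzero[OF T a(3)] by simp
    moreover have "s \<in> S" "s \<notin> P" using a(3) T PT by (auto simp: mult_closed_def)
    ultimately show "r \<in> P" using prime_idealD(3)[OF P] r by blast
  qed
qed

lemma prime_ideal_loc_ideal:
  assumes S: "is_subring S" and T: "mult_closed S T"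
    and P: "prime_ideal S P" and PT: "P \<inter> T = {}"
  shows "prime_ideal (loc_ideal S T) (loc_ideal P T)"
  unfolding prime_ideal_def
proof (intro conjI ballI impI)
  show "is_ideal (loc_ideal S T) (loc_ideal P T)" using is_ideal_loc_ideal[OF S T prime_idealD(1)[OF P]] .
  show "1 \<notin> loc_ideal P T"
    using loc_ideal_prime_contract[OF S T P PT] subring_one[OF S] prime_idealD(2)[OF P] by blast
next
  fix x y assume x: "x \<in> loc_ideal S T" and y: "y \<in> loc_ideal S T" and xy: "x * y \<in> loc_ideal P T"
  obtain a s b t where a: "x = a / s" "a \<in> S" "s \<in> T" and b: "y = b / t" "b \<in> S" "t \<in> T"
    using x y by (meson loc_idealE)
  have st: "s * t \<in> T" "s \<noteq> 0" "t \<noteq> 0"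
    using a b T mult_closed_nonzero[OF T] by (auto simp: mult_closed_def)
  have "a * b = (s * t) * (x * y)" using a b st by simp
  moreover have "s * t \<in> loc_ideal S T" using subset_loc_ideal[OF T] st(1) T by (auto simp: mult_closed_def)
  ultimately have "a * b \<in> loc_ideal P T \<inter> S"
    using loc_ideal_mult[OF T prime_idealD(1)[OF P] _ xy] subring_mult[OF S a(2) b(2)] by simp
  then have "a \<in> P \<or> b \<in> P"
    using loc_ideal_prime_contract[OF S T P PT] prime_idealD(3)[OF P a(2) b(2)] by blast
  then show "x \<in> loc_ideal P T \<or> y \<in> loc_ideal P T" using a(1,3) b(1,3) loc_idealI by blast
qed

lemma local_ringI:
  assumes A: "is_subring A" and N: "is_ideal A N" "1 \<notin> N"
    and unit: "\<And>y. y \<in> A \<Longrightarrow> y \<notin> N \<Longrightarrow> \<exists>z\<in>A. z * y = 1"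
  shows "local_ring A"
proof -
  have full: "J = A" if J: "is_ideal A J" "y \<in> J" "y \<notin> N" for J y
  proof -
    obtain z where "z \<in> A" "z * y = 1" using unit J ideal_subset by blast
    then have "1 \<in> J" using ideal_mult_left[OF J(1) _ J(2)] by metis
    then have "s \<in> J" if "s \<in> A" for s using ideal_mult_left[OF J(1) that \<open>1 \<in> J\<close>] by simp
    then show ?thesis using ideal_subset[OF J(1)] by auto
  qed
  have maxN: "maximal_ideal A N"
    unfolding maximal_ideal_def using N full subring_one[OF A] by blast
  have "J = N" if "maximal_ideal A J" for J
  proof -
    have J: "is_ideal A J" "J \<noteq> A" "\<And>K. is_ideal A K \<Longrightarrow> J \<subseteq> K \<Longrightarrow> K = J \<or> K = A"
      using that unfolding maximal_ideal_def by blast+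
    have "J \<subseteq> N" using full[OF J(1)] J(2) by blast
    then show ?thesis using J(3)[OF N(1)] N(2) subring_one[OF A] by blast
  qed
  then show ?thesis unfolding local_ring_def using maxN by blast
qed

lemma local_ring_loc_prime:
  assumes S: "is_subring S" and M: "prime_ideal S M"
  shows "local_ring (loc_ideal S (S - M))"
proof -
  have T: "mult_closed S (S - M)" using mult_closed_prime_compl[OF S M] .
  have MT: "M \<inter> (S - M) = {}" by blast
  show ?thesis
  proof (rule local_ringI[OF subring_loc_ideal[OF S T]])
    show "is_ideal (loc_ideal S (S - M)) (loc_ideal M (S - M))" "1 \<notin> loc_ideal M (S - M)"
      using prime_idealD[OF prime_ideal_loc_ideal[OF S T M MT]] by blast+
  next
    fix y assume y: "y \<in> loc_ideal S (S - M)" "y \<notin> loc_ideal M (S - M)"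
    obtain a s where a: "y = a / s" "a \<in> S" "s \<in> S - M" using y(1) by (rule loc_idealE)
    have "a \<notin> M" using y(2) a loc_idealI by blast
    then have "s / a \<in> loc_ideal S (S - M)" "(s / a) * y = 1"
      using a loc_idealI[of s S a "S - M"] mult_closed_nonzero[OF T a(3)]
        ideal_zero[OF prime_idealD(1)[OF M]] by auto
    then show "\<exists>z\<in>loc_ideal S (S - M). z * y = 1" by blast
  qed
qed

lemma overring_loc_ideal:
  assumes R: "is_subring R" and S: "overring R S" and T: "mult_closed S T"
  shows "overring R (loc_ideal S T)"
  unfolding overring_def
proof (intro conjI)
  have S': "is_subring S" "R \<subseteq> S" "S \<subseteq> frac R" using S by (auto simp: overring_def)
  show "is_subring (loc_ideal S T)" using subring_loc_ideal[OF S'(1) T] .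
  show "R \<subseteq> loc_ideal S T" using S'(2) subset_loc_ideal[OF T] by blast
  show "loc_ideal S T \<subseteq> frac R"
  proof
    fix y assume "y \<in> loc_ideal S T"
    then obtain a s where "y = a / s" "a \<in> S" "s \<in> T" by (rule loc_idealE)
    moreover have "s \<in> S" using \<open>s \<in> T\<close> T by (auto simp: mult_closed_def)
    ultimately show "y \<in> frac R" using S'(3) frac_divide[OF R] by blast
  qed
qed

lemma going_down_loc_integral:
  assumes R: "is_subring R" and S: "is_subring S" and RS: "R \<subseteq> S"
    and int: "\<forall>s\<in>S. integral_over R s"
    and inj: "\<And>P1 P2. prime_ideal S P1 \<Longrightarrow> prime_ideal S P2 \<Longrightarrow> P1 \<inter> R = P2 \<inter> R \<Longrightarrow> P1 = P2"
    and M: "prime_ideal S M"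
  shows "going_down R (loc_ideal S (S - M))"
  unfolding going_down_def
proof (intro allI impI)
  fix p q Q'
  assume "prime_ideal R p \<and> prime_ideal R q \<and> p \<subset> q \<and>
    prime_ideal (loc_ideal S (S - M)) Q' \<and> Q' \<inter> R = q"
  then have p: "prime_ideal R p" and q: "prime_ideal R q" and pq: "p \<subseteq> q"
    and Q': "prime_ideal (loc_ideal S (S - M)) Q'" and Q'R: "Q' \<inter> R = q" by auto
  have T: "mult_closed S (S - M)" using mult_closed_prime_compl[OF S M] .
  have Q'I: "is_ideal (loc_ideal S (S - M)) Q'" using prime_idealD(1)[OF Q'] .
  have Q: "prime_ideal S (Q' \<inter> S)"
    using prime_ideal_contract[OF S subset_loc_ideal[OF T] Q'] .
  have QM: "Q' \<inter> S \<subseteq> M"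
    using loc_ideal_proper_disjoint[OF S T Q'I prime_idealD(2)[OF Q']] by blast
  obtain P where P: "prime_ideal S P" "P \<inter> R = p"
    using integral_lying_over[OF R S RS int p] .
  obtain Q'' where Q'': "prime_ideal S Q''" "P \<subseteq> Q''" "Q'' \<inter> R = q"
    using integral_going_up[OF R S RS int P(1) q] P(2) pq by blast
  have "Q'' = Q' \<inter> S" using inj[OF Q''(1) Q] Q''(3) Q'R RS by blast
  then have PQ: "P \<subseteq> Q' \<inter> S" using Q''(2) by blast
  have PT: "P \<inter> (S - M) = {}" using PQ QM by blast
  show "\<exists>P'. prime_ideal (loc_ideal S (S - M)) P' \<and> P' \<subseteq> Q' \<and> P' \<inter> R = p"
  proof (intro exI conjI)
    show "prime_ideal (loc_ideal S (S - M)) (loc_ideal P (S - M))"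
      using prime_ideal_loc_ideal[OF S T P(1) PT] .
    show "loc_ideal P (S - M) \<subseteq> Q'" using loc_ideal_subset_ideal[OF S T Q'I] PQ by blast
    show "loc_ideal P (S - M) \<inter> R = p"
      using loc_ideal_prime_contract[OF S T P(1) PT] P(2) RS by blast
  qed
qed

text \<open>By perinormality the localization of S at a prime over q is a localization of R;
  its denominators are the required t, and they avoid q because they are units there.\<close>
lemma perinormal_integral_overring_denominator:
  assumes R: "is_subring R" and peri: "perinormal R" and ov: "overring R S"
    and int: "\<forall>s\<in>S. integral_over R s"
    and inj: "\<And>P1 P2. prime_ideal S P1 \<Longrightarrow> prime_ideal S P2 \<Longrightarrow> P1 \<inter> R = P2 \<inter> R \<Longrightarrow> P1 = P2"
    and q: "prime_ideal R q" and x: "x \<in> S"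
  obtains t where "t \<in> R - q" "t * x \<in> R"
proof -
  have S: "is_subring S" and RS: "R \<subseteq> S" using ov by (auto simp: overring_def)
  obtain M where M: "prime_ideal S M" "M \<inter> R = q" using integral_lying_over[OF R S RS int q] .
  have T: "mult_closed S (S - M)" using mult_closed_prime_compl[OF S M(1)] .
  have "is_localization R (loc_ideal S (S - M))"
    using peri overring_loc_ideal[OF R ov T] local_ring_loc_prime[OF S M(1)]
      going_down_loc_integral[OF R S RS int inj M(1)]
    unfolding perinormal_def by blast
  then obtain U where U: "mult_closed R U" "loc_ideal S (S - M) = loc_ideal R U"
    unfolding is_localization_def by blast
  have "x \<in> loc_ideal R U" using U(2) subset_loc_ideal[OF T] x by blast
  then obtain a t where at: "x = a / t" "a \<in> R" "t \<in> U" by (rule loc_idealE)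
  have tR: "t \<in> R" and t0: "t \<noteq> 0" using U(1) at(3) by (auto simp: mult_closed_def)
  have "t \<notin> q"
  proof
    assume "t \<in> q"
    then have tM: "t \<in> M" using M(2) by blast
    have "1 / t \<in> loc_ideal S (S - M)" using U(2) loc_idealI[OF subring_one[OF R] at(3)] by simp
    then obtain b s where bs: "1 / t = b / s" "b \<in> S" "s \<in> S - M" by (rule loc_idealE)
    then have "s = b * t" using t0 mult_closed_nonzero[OF T bs(3)] by (simp add: field_simps)
    then show False using ideal_mult_left[OF prime_idealD(1)[OF M(1)] bs(2) tM] bs(3) by simp
  qed
  moreover have "t * x \<in> R" using at t0 by simp
  ultimately show thesis using that tR by blast
qed

lemma is_ideal_conductor: "is_subring R \<Longrightarrow> is_ideal R {r \<in> R. r * x \<in> R}"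
  unfolding is_ideal_def
  by (auto simp: subring_zero subring_add subring_mult distrib_right mult.assoc)

text \<open>The conductor of x into R lies in no prime ideal, hence contains 1.\<close>
lemma perinormal_integral_overring_eq:
  assumes R: "is_subring R" and peri: "perinormal R" and ov: "overring R S"
    and int: "\<forall>s\<in>S. integral_over R s"
    and inj: "\<And>P1 P2. prime_ideal S P1 \<Longrightarrow> prime_ideal S P2 \<Longrightarrow> P1 \<inter> R = P2 \<inter> R \<Longrightarrow> P1 = P2"
  shows "S = R"
proof
  show "R \<subseteq> S" using ov by (simp add: overring_def)
  show "S \<subseteq> R"
  proof
    fix x assume x: "x \<in> S"
    show "x \<in> R"
    proof (rule ccontr)
      assume "x \<notin> R"
      then have "1 \<notin> {r \<in> R. r * x \<in> R}" by simp
      then obtain Q where Q: "prime_ideal R Q" "{r \<in> R. r * x \<in> R} \<subseteq> Q"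
        using proper_ideal_in_prime[OF R is_ideal_conductor[OF R]] by blast
      obtain t where "t \<in> R - Q" "t * x \<in> R"
        using perinormal_integral_overring_denominator[OF R peri ov int inj Q(1) x] .
      then show False using Q(2) by blast
    qed
  qed
qed

lemma weakly_normal_if_perinormal:
  assumes R: "is_subring R" and peri: "perinormal R"
  shows "weakly_normal R"
  unfolding weakly_normal_def
proof (intro allI impI)
  fix S assume "overring R S \<and> (\<forall>x\<in>S. integral_over R x) \<and>
      bij_betw (\<lambda>P. P \<inter> R) {P. prime_ideal S P} {p. prime_ideal R p} \<and>
      (\<forall>P. prime_ideal S P \<longrightarrow> residue_purely_insep R S P)"
  then have ov: "overring R S" and int: "\<forall>x\<in>S. integral_over R x"
    and "inj_on (\<lambda>P. P \<inter> R) {P. prime_ideal S P}" by (auto simp: bij_betw_def)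
  then have "P1 = P2" if "prime_ideal S P1" "prime_ideal S P2" "P1 \<inter> R = P2 \<inter> R" for P1 P2
    using that unfolding inj_on_def by blast
  then show "S = R" using perinormal_integral_overring_eq[OF R peri ov int] by blast
qed

text \<open>R + R x, which is the ring R[x] as soon as x^2 \<in> R.\<close>
definition adjoin :: "'a::field set \<Rightarrow> 'a \<Rightarrow> 'a set" where
  "adjoin R x = {a + b * x | a b. a \<in> R \<and> b \<in> R}"

lemma adjoinI: "a \<in> R \<Longrightarrow> b \<in> R \<Longrightarrow> a + b * x \<in> adjoin R x"
  unfolding adjoin_def by blast

lemma adjoinE:
  "s \<in> adjoin R x \<Longrightarrow> (\<And>a b. s = a + b * x \<Longrightarrow> a \<in> R \<Longrightarrow> b \<in> R \<Longrightarrow> thesis) \<Longrightarrow> thesis"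
  unfolding adjoin_def by blast

lemma subset_adjoin: "is_subring R \<Longrightarrow> R \<subseteq> adjoin R x"
  using adjoinI[of _ R 0 x] subring_zero by force

lemma mem_adjoin: "is_subring R \<Longrightarrow> x \<in> adjoin R x"
  using adjoinI[of 0 R 1 x] subring_zero subring_one by force

lemma subring_adjoin:
  assumes R: "is_subring R" and x2: "x ^ 2 \<in> R"
  shows "is_subring (adjoin R x)"
  unfolding is_subring_def
proof (intro conjI ballI)
  show "0 \<in> adjoin R x" "1 \<in> adjoin R x"
    using subset_adjoin[OF R] subring_zero[OF R] subring_one[OF R] by auto
  fix s t assume "s \<in> adjoin R x" "t \<in> adjoin R x"
  then obtain a b c d where ab: "s = a + b * x" "a \<in> R" "b \<in> R"
    and cd: "t = c + d * x" "c \<in> R" "d \<in> R" by (meson adjoinE)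
  have "s + t = (a + c) + (b + d) * x" "s - t = (a - c) + (b - d) * x"
    "s * t = (a * c + (b * d) * x ^ 2) + (a * d + b * c) * x"
    using ab cd by (simp_all add: algebra_simps power2_eq_square)
  moreover have "(a + c) + (b + d) * x \<in> adjoin R x" "(a - c) + (b - d) * x \<in> adjoin R x"
    "(a * c + (b * d) * x ^ 2) + (a * d + b * c) * x \<in> adjoin R x"
    using ab cd x2 subring_add[OF R] subring_diff[OF R] subring_mult[OF R] by (simp_all add: adjoinI)
  ultimately show "s + t \<in> adjoin R x" "s - t \<in> adjoin R x" "s * t \<in> adjoin R x"
    by simp_all
qed

lemma overring_adjoin:
  assumes R: "is_subring R" and x: "x \<in> frac R" and x2: "x ^ 2 \<in> R"
  shows "overring R (adjoin R x)"
  unfolding overring_def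
proof (intro conjI)
  show "is_subring (adjoin R x)" using subring_adjoin[OF R x2] .
  show "R \<subseteq> adjoin R x" using subset_adjoin[OF R] .
  obtain c d where cd: "x = c / d" "c \<in> R" "d \<in> R" "d \<noteq> 0" using x unfolding frac_def by blast
  show "adjoin R x \<subseteq> frac R"
  proof
    fix s assume "s \<in> adjoin R x"
    then obtain a b where ab: "s = a + b * x" "a \<in> R" "b \<in> R" by (rule adjoinE)
    then have "s = (a * d + b * c) / d" using cd by (simp add: field_simps)
    moreover have "a * d + b * c \<in> R" using ab cd subring_add[OF R] subring_mult[OF R] by blast
    ultimately show "s \<in> frac R" using cd unfolding frac_def by blast
  qed
qed

text \<open>a + b x is a root of X^2 - 2 a X + (a^2 - b^2 x^2).\<close>
lemma integral_over_adjoin: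
  assumes R: "is_subring R" and x2: "x ^ 2 \<in> R" and s: "s \<in> adjoin R x"
  shows "integral_over R s"
proof -
  obtain a b where ab: "s = a + b * x" "a \<in> R" "b \<in> R" using s by (rule adjoinE)
  define c where "c i = (if i = 0 then a * a - b * b * x ^ 2 else 0 - (a + a))" for i :: nat
  have "c 0 \<in> R" using ab x2 subring_diff[OF R] subring_mult[OF R] by (simp add: c_def)
  moreover have "c 1 = 0 - (a + a)" by (simp add: c_def)
  then have "c 1 \<in> R" using subring_diff[OF R subring_zero[OF R] subring_add[OF R ab(2) ab(2)]] by simp
  ultimately have "\<forall>i<2. c i \<in> R" by (auto simp: numeral_2_eq_2 less_Suc_eq)
  moreover have "s ^ 2 + (\<Sum>i<2. c i * s ^ i) = (s - a) * (s - a) - (b * x) * (b * x)"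
    by (simp add: c_def numeral_2_eq_2 algebra_simps)
  then have "s ^ 2 + (\<Sum>i<2. c i * s ^ i) = 0" using ab(1) by simp
  ultimately show ?thesis unfolding integral_over_def by blast
qed

lemma sq_mult_adjoin:
  assumes R: "is_subring R" and x2: "x ^ 2 \<in> R" and x3: "x ^ 3 \<in> R" and s: "s \<in> adjoin R x"
  shows "x ^ 2 * s \<in> R"
proof -
  obtain a b where ab: "s = a + b * x" "a \<in> R" "b \<in> R" using s by (rule adjoinE)
  then have "x ^ 2 * s = a * x ^ 2 + b * x ^ 3"
    by (simp add: algebra_simps power2_eq_square power3_eq_cube)
  then show ?thesis using subring_add[OF R subring_mult[OF R ab(2) x2] subring_mult[OF R ab(3) x3]] by simp
qed

text \<open>If x^2 \<in> P1 then x lies in both primes and everything is decided by the R-part;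
  otherwise x^2 is a unit modulo both and x^2 s \<in> R transports membership.\<close>
lemma prime_ideal_adjoin_contract_subset:
  assumes R: "is_subring R" and x2: "x ^ 2 \<in> R" and x3: "x ^ 3 \<in> R"
    and P1: "prime_ideal (adjoin R x) P1" and P2: "prime_ideal (adjoin R x) P2"
    and eq: "P1 \<inter> R = P2 \<inter> R"
  shows "P1 \<subseteq> P2"
proof
  let ?S = "adjoin R x"
  have S: "is_subring ?S" using subring_adjoin[OF R x2] .
  have I1: "is_ideal ?S P1" and I2: "is_ideal ?S P2" using P1 P2 by (simp_all add: prime_idealD)
  have xS: "x \<in> ?S" and x2S: "x ^ 2 \<in> ?S" using mem_adjoin[OF R] subset_adjoin[OF R] x2 by auto
  fix s assume s: "s \<in> P1"
  have sS: "s \<in> ?S" using s ideal_subset[OF I1] by blast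
  show "s \<in> P2"
  proof (cases "x ^ 2 \<in> P1")
    case True
    then have "x ^ 2 \<in> P2" using eq x2 by blast
    then have xP: "x \<in> P1" "x \<in> P2"
      using True prime_ideal_power[OF P1 S xS] prime_ideal_power[OF P2 S xS] by blast+
    obtain a b where ab: "s = a + b * x" "a \<in> R" "b \<in> R" using sS by (rule adjoinE)
    have bS: "b \<in> ?S" using ab(3) subset_adjoin[OF R] by blast
    have "a = s - b * x" using ab by simp
    also have "\<dots> \<in> P1" using ideal_diff[OF S I1 s ideal_mult_left[OF I1 bS xP(1)]] .
    finally have "a \<in> P2" using eq ab(2) by blast
    then show ?thesis using ab(1) ideal_add[OF I2 _ ideal_mult_left[OF I2 bS xP(2)]] by simp
  next
    case False
    have "x ^ 2 * s \<in> P2"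
      using ideal_mult_left[OF I1 x2S s] sq_mult_adjoin[OF R x2 x3 sS] eq by blast
    moreover have "x ^ 2 \<notin> P2" using False eq x2 by blast
    ultimately show ?thesis using prime_idealD(3)[OF P2 x2S sS] by blast
  qed
qed

lemma seminormal_if_perinormal:
  assumes R: "is_subring R" and peri: "perinormal R"
  shows "seminormal R"
  unfolding seminormal_def
proof (intro ballI impI)
  fix x assume x: "x \<in> frac R" and "x ^ 2 \<in> R \<and> x ^ 3 \<in> R"
  then have x2: "x ^ 2 \<in> R" and x3: "x ^ 3 \<in> R" by simp_all
  have "adjoin R x = R"
  proof (rule perinormal_integral_overring_eq[OF R peri overring_adjoin[OF R x x2]])
    show "\<forall>s\<in>adjoin R x. integral_over R s" using integral_over_adjoin[OF R x2] by blast
    fix P1 P2 assume "prime_ideal (adjoin R x) P1" "prime_ideal (adjoin R x) P2" "P1 \<inter> R = P2 \<inter> R"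
    then show "P1 = P2"
      using prime_ideal_adjoin_contract_subset[OF R x2 x3] by (metis subset_antisym)
  qed
  then show "x \<in> R" using mem_adjoin[OF R] by blast
qed

theorem corollary3p4:
  fixes R :: "'a::field set"
  assumes "is_subring R" and "perinormal R"
  shows "weakly_normal R \<and> seminormal R"
  using weakly_normal_if_perinormal[OF assms] seminormal_if_perinormal[OF assms] by blast

end
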